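(* Let $D$ be a strongly connected digraph with exactly three complementarity eigenvalues. If $D$ contains a subdigraph isomorphic to an $\infty$-digraph $\infty(r,s)$, then $D$ is isomorphic to $\infty(r,s)$, to a Type 1 digraph $D_1(r,s)$, or to a Type 2 digraph $D_2(r,s)$ (for some appropriate labelling of the two cycles).
   Context: All digraphs are finite, without loops and without multiple arcs. For a digraph $D$ with adjacency matrix $A$ (on $n$ vertices), a real $\lambda$ is a complementarity eigenvalue if there is a nonzero $x\in\mathbb{R}^n$, $x\ge0$, with $Ax-\lambda x\ge 0$ and $\langle x,Ax-\lambda x\rangle=0$; $\Pi(D)$ is the set of complementarity eigenvalues. Subdigraphs need not be induced. For $r,s\ge2$, $\infty(r,s)$ is the coalescence of a directed cycle $\vec C_r$ on vertices $1,2,\dots,r$ (arcs $(i,i+1)$ and $(r,1)$) and a directed cycle $\vec C_s$ on vertices $1',2',\dots,s'$ (arcs $(i',(i+1)')$ and $(s',1')$), where $1'$ is identified with $1$. The Type 1 digraph is $D_1(r,s)=\infty(r,s)$ together with the arc $(r,2')$. The Type 2 digraph is $D_2(r,s)=\infty(r,s)$ together with the arcs $(r,2')$ and $(s',2)$. *)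

theory Defs
  imports Complex_Main
begin

definition digraph :: "'a set \<Rightarrow> ('a \<times> 'a) set \<Rightarrow> bool" where
  "digraph V E \<longleftrightarrow> finite V \<and> E \<subseteq> V \<times> V \<and> (\<forall>v. (v, v) \<notin> E)"

definition adj :: "('a \<times> 'a) set \<Rightarrow> 'a \<Rightarrow> 'a \<Rightarrow> real" where
  "adj E u v = (if (u, v) \<in> E then 1 else 0)"

definition comp_eigenvalues :: "'a set \<Rightarrow> ('a \<times> 'a) set \<Rightarrow> real set" where
  "comp_eigenvalues V E = {lam. \<exists>x :: 'a \<Rightarrow> real.
      (\<forall>v\<in>V. x v \<ge> 0) \<and> (\<exists>v\<in>V. x v \<noteq> 0) \<and>
      (\<forall>v\<in>V. (\<Sum>u\<in>V. adj E v u * x u) - lam * x v \<ge> 0) \<and>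
      (\<Sum>v\<in>V. x v * ((\<Sum>u\<in>V. adj E v u * x u) - lam * x v)) = 0}"

definition strongly_connected :: "'a set \<Rightarrow> ('a \<times> 'a) set \<Rightarrow> bool" where
  "strongly_connected V E \<longleftrightarrow> (\<forall>u\<in>V. \<forall>v\<in>V. (u, v) \<in> E\<^sup>*)"

definition has_subdigraph_iso ::
    "'a set \<Rightarrow> ('a \<times> 'a) set \<Rightarrow> 'b set \<Rightarrow> ('b \<times> 'b) set \<Rightarrow> bool" where
  "has_subdigraph_iso V E V' E' \<longleftrightarrow>
     (\<exists>f. inj_on f V' \<and> f ` V' \<subseteq> V \<and> (\<forall>(u, v)\<in>E'. (f u, f v) \<in> E))"

definition digraph_iso ::
    "'a set \<Rightarrow> ('a \<times> 'a) set \<Rightarrow> 'b set \<Rightarrow> ('b \<times> 'b) set \<Rightarrow> bool" where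
  "digraph_iso V E V' E' \<longleftrightarrow>
     (\<exists>f. bij_betw f V V' \<and> (\<forall>u\<in>V. \<forall>v\<in>V. (u, v) \<in> E \<longleftrightarrow> (f u, f v) \<in> E'))"

text \<open>Vertices of \<infinity>(r,s): Inl i (1 \<le> i \<le> r) is vertex i of the r-cycle,
  Inr j (2 \<le> j \<le> s) is vertex j' of the s-cycle; vertex 1' is identified with Inl 1.\<close>
definition cv1 :: "nat \<Rightarrow> nat + nat" where "cv1 i = Inl i"
definition cv2 :: "nat \<Rightarrow> nat + nat" where "cv2 j = (if j = 1 then Inl 1 else Inr j)"

definition inf_verts :: "nat \<Rightarrow> nat \<Rightarrow> (nat + nat) set" where
  "inf_verts r s = cv1 ` {1..r} \<union> cv2 ` {1..s}"

definition inf_arcs :: "nat \<Rightarrow> nat \<Rightarrow> ((nat + nat) \<times> (nat + nat)) set" where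
  "inf_arcs r s =
     {(cv1 i, cv1 (i + 1)) | i. 1 \<le> i \<and> i < r} \<union> {(cv1 r, cv1 1)} \<union>
     {(cv2 j, cv2 (j + 1)) | j. 1 \<le> j \<and> j < s} \<union> {(cv2 s, cv2 1)}"

definition type1_arcs :: "nat \<Rightarrow> nat \<Rightarrow> ((nat + nat) \<times> (nat + nat)) set" where
  "type1_arcs r s = inf_arcs r s \<union> {(cv1 r, cv2 2)}"

definition type2_arcs :: "nat \<Rightarrow> nat \<Rightarrow> ((nat + nat) \<times> (nat + nat)) set" where
  "type2_arcs r s = inf_arcs r s \<union> {(cv1 r, cv2 2), (cv2 s, cv1 2)}"

end

(* For a vertex set J inducing a strongly connected subdigraph, the Collatz-Wielandt value
   cw_root E J (the Perron root of the principal submatrix A_J) is attained by a positive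
   eigenvector of A_J. Extended by zero, that vector is a complementarity eigenvector of the
   whole digraph, and cw_root E J increases strictly along strict inclusions of such sets. So a
   digraph with only three complementarity eigenvalues has no chain X1 < X2 < X3 < V of
   nonempty strongly connected vertex sets.

   For an embedded copy of inf(r, s) with cycles C and C', the chain {1} < C < C u C' forces the
   copy to span V, and every arc of D outside the copy would create such a chain: a chord of one
   cycle closes a shorter cycle inside it, and an arc i -> j' other than (r, 2') closes a cycle
   through 1 that misses 2' or r (symmetrically for arcs j' -> i). Hence only (r, 2') and
   (s', 2) can be added, giving inf(r, s), D_1(r, s), D_1(s, r) or D_2(r, s). *)

theory Submission
  imports Defs "HOL-Analysis.Analysis"
begin

definition induced_strongly_connected :: "'a set \<Rightarrow> ('a \<times> 'a) set \<Rightarrow> bool" where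
  "induced_strongly_connected Z R \<longleftrightarrow> (\<forall>u\<in>Z. \<forall>v\<in>Z. (u, v) \<in> (Restr R Z)\<^sup>*)"

definition nested_sc_triple :: "'a set \<Rightarrow> ('a \<times> 'a) set \<Rightarrow> bool" where
  "nested_sc_triple W R \<longleftrightarrow> (\<exists>X1 X2 X3. X1 \<noteq> {} \<and> X1 \<subset> X2 \<and> X2 \<subset> X3 \<and> X3 \<subset> W \<and>
     induced_strongly_connected X1 R \<and> induced_strongly_connected X2 R \<and>
     induced_strongly_connected X3 R)"

lemma rtrancl_enters:
  assumes "(a, b) \<in> R\<^sup>*" "a \<notin> S" "b \<in> S"
  obtains u w where "(u, w) \<in> R" "u \<notin> S" "w \<in> S"
  using assms by (induction rule: rtrancl_induct) auto

section \<open>Collatz--Wielandt values of strongly connected vertex sets\<close>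

definition adj_mul :: "('a \<times> 'a) set \<Rightarrow> 'a set \<Rightarrow> ('a \<Rightarrow> real) \<Rightarrow> 'a \<Rightarrow> real" where
  "adj_mul E J x v = (\<Sum>u\<in>J. adj E v u * x u)"

definition sub_eigvec :: "('a \<times> 'a) set \<Rightarrow> 'a set \<Rightarrow> real \<Rightarrow> ('a \<Rightarrow> real) \<Rightarrow> bool" where
  "sub_eigvec E J \<mu> x \<longleftrightarrow>
     (\<forall>v. v \<notin> J \<longrightarrow> x v = 0) \<and> (\<forall>v\<in>J. 0 \<le> x v) \<and> (\<forall>v\<in>J. \<mu> * x v \<le> adj_mul E J x v)"

definition cw_values :: "('a \<times> 'a) set \<Rightarrow> 'a set \<Rightarrow> real set" where
  "cw_values E J = {\<mu>. \<exists>x. sub_eigvec E J \<mu> x \<and> sum x J = 1}"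

text \<open>The Collatz--Wielandt formula for the Perron root of the principal submatrix of the
  adjacency matrix indexed by \<open>J\<close>.\<close>
definition cw_root :: "('a \<times> 'a) set \<Rightarrow> 'a set \<Rightarrow> real" where
  "cw_root E J = Sup (cw_values E J)"

definition slack_set :: "('a \<times> 'a) set \<Rightarrow> 'a set \<Rightarrow> real \<Rightarrow> ('a \<Rightarrow> real) \<Rightarrow> 'a set" where
  "slack_set E J \<mu> x = {v\<in>J. \<mu> * x v < adj_mul E J x v}"

lemma adj_mul_nonneg: "\<forall>u\<in>J. 0 \<le> x u \<Longrightarrow> 0 \<le> adj_mul E J x v"
  unfolding adj_mul_def adj_def by (intro sum_nonneg) simp

lemma adj_mul_ge_arc:
  assumes "finite J" "w \<in> J" "(v, w) \<in> E" "\<forall>u\<in>J. 0 \<le> x u"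
  shows "x w \<le> adj_mul E J x v"
proof -
  have "x w = adj E v w * x w" using assms(3) by (simp add: adj_def)
  also have "\<dots> \<le> adj_mul E J x v"
    unfolding adj_mul_def using assms by (intro member_le_sum) (auto simp: adj_def)
  finally show ?thesis .
qed

lemma adj_mul_upd:
  assumes "finite J" "w \<in> J"
  shows "adj_mul E J (x(w := x w + \<epsilon>)) v = adj_mul E J x v + adj E v w * \<epsilon>"
proof -
  have "adj_mul E J (x(w := x w + \<epsilon>)) v = (\<Sum>u\<in>J. adj E v u * x u + (if u = w then adj E v w * \<epsilon> else 0))"
    unfolding adj_mul_def by (intro sum.cong) (auto simp: distrib_left)
  also have "\<dots> = adj_mul E J x v + adj E v w * \<epsilon>"
    using assms by (simp add: sum.distrib adj_mul_def)
  finally show ?thesis .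
qed

lemma adj_mul_divide: "adj_mul E J (\<lambda>u. x u / c) v = adj_mul E J x v / c"
  unfolding adj_mul_def by (simp add: sum_divide_distrib)

lemma sub_eigvec_mono:
  assumes "finite J" "H \<subseteq> J" "sub_eigvec E H \<mu> x"
  shows "sub_eigvec E J \<mu> x" and "sum x J = sum x H"
proof -
  have zero: "\<forall>v. v \<notin> H \<longrightarrow> x v = 0" and nonneg: "\<forall>v\<in>H. 0 \<le> x v"
    and le: "\<forall>v\<in>H. \<mu> * x v \<le> adj_mul E H x v"
    using assms(3) by (auto simp: sub_eigvec_def)
  have nonneg_J: "\<forall>v\<in>J. 0 \<le> x v"
  proof
    fix v show "0 \<le> x v" using zero nonneg by (cases "v \<in> H") auto
  qed
  have same: "adj_mul E J x v = adj_mul E H x v" for v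
    unfolding adj_mul_def using assms(1,2) zero by (intro sum.mono_neutral_right) auto
  have "\<mu> * x v \<le> adj_mul E J x v" if "v \<in> J" for v
  proof (cases "v \<in> H")
    case True then show ?thesis using le same by simp
  next
    case False then show ?thesis using zero adj_mul_nonneg[OF nonneg_J] by simp
  qed
  then show "sub_eigvec E J \<mu> x" using zero nonneg_J assms(2) by (auto simp: sub_eigvec_def)
  show "sum x J = sum x H"
    using assms(1,2) zero by (intro sum.mono_neutral_right) auto
qed

lemma cw_values_normalize:
  assumes "sub_eigvec E J \<mu> x" "0 < sum x J"
  shows "\<mu> \<in> cw_values E J"
proof -
  have "sub_eigvec E J \<mu> (\<lambda>u. x u / sum x J)"
    using assms by (auto simp: sub_eigvec_def adj_mul_divide divide_right_mono)
  moreover have "(\<Sum>u\<in>J. x u / sum x J) = 1"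
    using assms(2) by (simp add: sum_divide_distrib[symmetric])
  ultimately show ?thesis unfolding cw_values_def by blast
qed

lemma cw_values_le_card:
  assumes "\<mu> \<in> cw_values E J"
  shows "\<mu> \<le> real (card J)"
proof -
  obtain x where x: "sub_eigvec E J \<mu> x" "sum x J = 1"
    using assms by (auto simp: cw_values_def)
  have "\<mu> = (\<Sum>v\<in>J. \<mu> * x v)" using x(2) by (simp add: sum_distrib_left[symmetric])
  also have "\<dots> \<le> (\<Sum>v\<in>J. adj_mul E J x v)"
    using x(1) by (intro sum_mono) (simp add: sub_eigvec_def)
  also have "\<dots> \<le> (\<Sum>v\<in>J. sum x J)"
    unfolding adj_mul_def using x(1)
    by (intro sum_mono mult_left_le_one_le) (auto simp: adj_def sub_eigvec_def)
  also have "\<dots> = real (card J)" using x(2) by simp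
  finally show ?thesis .
qed

lemma cw_root_upper: "\<mu> \<in> cw_values E J \<Longrightarrow> \<mu> \<le> cw_root E J"
  unfolding cw_root_def by (rule cSup_upper) (auto intro: bdd_aboveI cw_values_le_card)

lemma compact_cw_pairs:
  assumes "finite J"
  shows "compact {(x, \<mu>). sub_eigvec E J \<mu> x \<and> sum x J = 1 \<and> 0 \<le> \<mu>}"
proof -
  define B :: "('a \<Rightarrow> real) set" where "B = Pi UNIV (\<lambda>v. if v \<in> J then {0..1} else {0})"
  have "compact B"
  proof -
    have "compactin (product_topology (\<lambda>_. euclidean) UNIV)
        (PiE UNIV (\<lambda>v. if v \<in> J then {0..1::real} else {0}))"
      by (subst compactin_PiE) auto
    then show ?thesis unfolding B_def by (simp add: euclidean_product_topology PiE_UNIV_domain)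
  qed
  have coord: "continuous_on UNIV (\<lambda>p::('a \<Rightarrow> real) \<times> real. fst p v)" for v
    by (rule continuous_on_compose2[OF continuous_on_product_coordinates[of v]])
      (auto intro: continuous_intros)
  define K where "K = (B \<times> {0..real (card J)}) \<inter> {p. sum (fst p) J = 1} \<inter>
      (\<Inter>v\<in>J. {p. snd p * fst p v \<le> adj_mul E J (fst p) v})"
  have "closed {p::('a \<Rightarrow> real) \<times> real. sum (fst p) J = 1}"
    by (rule closed_Collect_eq) (auto intro!: continuous_intros continuous_on_sum coord)
  moreover have "closed {p::('a \<Rightarrow> real) \<times> real. snd p * fst p v \<le> adj_mul E J (fst p) v}" for v
    unfolding adj_mul_def
    by (rule closed_Collect_le) (auto intro!: continuous_intros continuous_on_sum coord)
  ultimately have "compact K"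
    unfolding K_def using \<open>compact B\<close> by (intro compact_Int_closed compact_Times closed_INT) auto
  moreover have "(x, \<mu>) \<in> K \<longleftrightarrow> sub_eigvec E J \<mu> x \<and> sum x J = 1 \<and> 0 \<le> \<mu>" for x \<mu>
  proof
    assume "(x, \<mu>) \<in> K"
    then show "sub_eigvec E J \<mu> x \<and> sum x J = 1 \<and> 0 \<le> \<mu>"
      unfolding K_def B_def sub_eigvec_def by (auto simp: Pi_iff split: if_splits)
  next
    assume x: "sub_eigvec E J \<mu> x \<and> sum x J = 1 \<and> 0 \<le> \<mu>"
    have "x v \<le> 1" if "v \<in> J" for v
      using x that assms member_le_sum[of v J x] by (auto simp: sub_eigvec_def)
    moreover have "\<mu> \<le> real (card J)" using x by (intro cw_values_le_card) (auto simp: cw_values_def)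
    ultimately show "(x, \<mu>) \<in> K"
      using x unfolding K_def B_def sub_eigvec_def by (auto simp: Pi_iff)
  qed
  then have "K = {(x, \<mu>). sub_eigvec E J \<mu> x \<and> sum x J = 1 \<and> 0 \<le> \<mu>}" by auto
  ultimately show ?thesis by simp
qed

lemma cw_root_attained:
  assumes "finite J" "J \<noteq> {}"
  shows "\<exists>x. sub_eigvec E J (cw_root E J) x \<and> sum x J = 1"
proof -
  let ?K = "{(x, \<mu>). sub_eigvec E J \<mu> x \<and> sum x J = 1 \<and> 0 \<le> \<mu>}"
  obtain w where "w \<in> J" using assms(2) by blast
  then have "((\<lambda>v. if v = w then 1 else 0), 0) \<in> ?K"
    unfolding sub_eigvec_def using assms(1) by (simp add: adj_mul_nonneg)
  moreover have "continuous_on ?K snd" by (intro continuous_intros)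
  ultimately obtain p where p: "p \<in> ?K" "\<forall>q\<in>?K. snd q \<le> snd p"
    using continuous_attains_sup[OF compact_cw_pairs[OF assms(1)]] by blast
  then have p_sub: "sub_eigvec E J (snd p) (fst p)" "sum (fst p) J = 1" "0 \<le> snd p"
    by auto
  have "cw_root E J = snd p"
    unfolding cw_root_def
  proof (rule cSup_eq_maximum)
    show "snd p \<in> cw_values E J" using p_sub by (auto simp: cw_values_def)
  next
    fix \<mu> assume "\<mu> \<in> cw_values E J"
    then obtain x where "sub_eigvec E J \<mu> x" "sum x J = 1" by (auto simp: cw_values_def)
    then show "\<mu> \<le> snd p"
      using p(2) p_sub(3) by (cases "0 \<le> \<mu>") fastforce+
  qed
  then show ?thesis using p_sub by auto
qed

lemma sub_eigvec_raise:
  assumes "finite J" "sub_eigvec E J \<mu> y" "w \<in> slack_set E J \<mu> y"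
  obtains \<epsilon> where "sub_eigvec E J \<mu> (y(w := y w + \<epsilon>))"
    and "slack_set E J \<mu> y \<subseteq> slack_set E J \<mu> (y(w := y w + \<epsilon>))"
    and "\<And>u. u \<in> J \<Longrightarrow> (u, w) \<in> E \<Longrightarrow> u \<in> slack_set E J \<mu> (y(w := y w + \<epsilon>))"
proof -
  have "w \<in> J" using assms(3) by (simp add: slack_set_def)
  define \<delta> where "\<delta> = adj_mul E J y w - \<mu> * y w"
  have "0 < \<delta>" using assms(3) by (simp add: slack_set_def \<delta>_def)
  define \<epsilon> where "\<epsilon> = \<delta> / (\<bar>\<mu>\<bar> + 1)"
  have "0 < \<epsilon>" using \<open>0 < \<delta>\<close> by (simp add: \<epsilon>_def)
  have "\<mu> * \<epsilon> < \<delta>"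
  proof -
    have "\<mu> * \<epsilon> \<le> \<bar>\<mu>\<bar> * \<epsilon>" using \<open>0 < \<epsilon>\<close> by (simp add: mult_right_mono)
    also have "\<dots> < (\<bar>\<mu>\<bar> + 1) * \<epsilon>" using \<open>0 < \<epsilon>\<close> by simp
    also have "\<dots> = \<delta>" by (simp add: \<epsilon>_def)
    finally show ?thesis .
  qed
  define y' where "y' = y(w := y w + \<epsilon>)"
  have A_y': "adj_mul E J y' v = adj_mul E J y v + adj E v w * \<epsilon>" for v
    unfolding y'_def using adj_mul_upd[OF assms(1) \<open>w \<in> J\<close>] .
  have A_mono: "adj_mul E J y v \<le> adj_mul E J y' v" for v
    using A_y' \<open>0 < \<epsilon>\<close> by (simp add: adj_def)
  have slack_w: "\<mu> * y' w < adj_mul E J y' w"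
    using A_mono[of w] \<open>\<mu> * \<epsilon> < \<delta>\<close> by (simp add: y'_def \<delta>_def distrib_left)
  have off_w: "y' v = y v" if "v \<noteq> w" for v using that by (simp add: y'_def)
  have "\<mu> * y' v \<le> adj_mul E J y' v" if "v \<in> J" for v
  proof (cases "v = w")
    case True then show ?thesis using slack_w by simp
  next
    case False then show ?thesis
      using assms(2) that A_mono[of v] off_w[of v] unfolding sub_eigvec_def by fastforce
  qed
  then have "sub_eigvec E J \<mu> y'"
    using assms(2) \<open>w \<in> J\<close> \<open>0 < \<epsilon>\<close> unfolding sub_eigvec_def y'_def by auto
  moreover have "slack_set E J \<mu> y \<subseteq> slack_set E J \<mu> y'"
    using slack_w \<open>w \<in> J\<close> A_mono off_w by (auto simp: slack_set_def) (metis order.strict_trans2)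
  moreover have "u \<in> slack_set E J \<mu> y'" if "u \<in> J" "(u, w) \<in> E" for u
  proof (cases "u = w")
    case True then show ?thesis using slack_w \<open>w \<in> J\<close> by (simp add: slack_set_def)
  next
    case False
    have "adj_mul E J y' u = adj_mul E J y u + \<epsilon>" using A_y' that(2) by (simp add: adj_def)
    then show ?thesis
      using assms(2) that(1) off_w[OF False] \<open>0 < \<epsilon>\<close> by (auto simp: sub_eigvec_def slack_set_def)
  qed
  ultimately show ?thesis using that unfolding y'_def by blast
qed

lemma slack_set_grow:
  assumes "finite J" "induced_strongly_connected J E" "sub_eigvec E J \<mu> y"
    and "slack_set E J \<mu> y \<noteq> {}" "slack_set E J \<mu> y \<noteq> J"
  shows "\<exists>y'. sub_eigvec E J \<mu> y' \<and> slack_set E J \<mu> y \<subset> slack_set E J \<mu> y'"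
proof -
  let ?S = "slack_set E J \<mu>"
  have "?S y \<subseteq> J" by (auto simp: slack_set_def)
  then obtain a b where "a \<in> J" "a \<notin> ?S y" "b \<in> ?S y"
    using assms(4,5) by blast
  then have "(a, b) \<in> (Restr E J)\<^sup>*"
    using assms(2) \<open>?S y \<subseteq> J\<close> unfolding induced_strongly_connected_def by blast
  then obtain u w where "(u, w) \<in> Restr E J" "u \<notin> ?S y" "w \<in> ?S y"
    by (rule rtrancl_enters[OF _ \<open>a \<notin> ?S y\<close> \<open>b \<in> ?S y\<close>])
  moreover obtain \<epsilon> where "sub_eigvec E J \<mu> (y(w := y w + \<epsilon>))"
    "?S y \<subseteq> ?S (y(w := y w + \<epsilon>))" "\<And>u. u \<in> J \<Longrightarrow> (u, w) \<in> E \<Longrightarrow> u \<in> ?S (y(w := y w + \<epsilon>))"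
    using sub_eigvec_raise[OF assms(1,3) \<open>w \<in> ?S y\<close>] by blast
  ultimately show ?thesis by blast
qed

lemma slack_set_full:
  assumes "finite J" "induced_strongly_connected J E"
  shows "sub_eigvec E J \<mu> y \<Longrightarrow> slack_set E J \<mu> y \<noteq> {} \<Longrightarrow>
    \<exists>z. sub_eigvec E J \<mu> z \<and> slack_set E J \<mu> z = J"
proof (induction "card (J - slack_set E J \<mu> y)" arbitrary: y rule: less_induct)
  case less
  show ?case
  proof (cases "slack_set E J \<mu> y = J")
    case True then show ?thesis using less.prems by blast
  next
    case False
    then obtain y' where y': "sub_eigvec E J \<mu> y'" "slack_set E J \<mu> y \<subset> slack_set E J \<mu> y'"
      using slack_set_grow[OF assms less.prems] by blast
    have "slack_set E J \<mu> y' \<subseteq> J" by (auto simp: slack_set_def)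
    then have "J - slack_set E J \<mu> y' \<subset> J - slack_set E J \<mu> y" using y'(2) by blast
    then have "card (J - slack_set E J \<mu> y') < card (J - slack_set E J \<mu> y)"
      using assms(1) by (simp add: psubset_card_mono)
    then show ?thesis using less.hyps y' by blast
  qed
qed

lemma cw_values_above_strict:
  assumes "finite J" "J \<noteq> {}" "sub_eigvec E J \<mu> z" "slack_set E J \<mu> z = J"
  shows "\<exists>\<mu>'>\<mu>. \<mu>' \<in> cw_values E J"
proof -
  have strict: "\<forall>v\<in>J. \<mu> * z v < adj_mul E J z v"
    using assms(4) by (auto simp: slack_set_def)
  have "\<forall>v\<in>J. \<forall>\<^sub>F t in at_right \<mu>. t * z v < adj_mul E J z v"
  proof
    fix v assume "v \<in> J"
    have "((\<lambda>t. t * z v) \<longlongrightarrow> \<mu> * z v) (at_right \<mu>)"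
      by (intro tendsto_intros tendsto_ident_at)
    then show "\<forall>\<^sub>F t in at_right \<mu>. t * z v < adj_mul E J z v"
      using strict \<open>v \<in> J\<close> by (simp add: order_tendstoD(2))
  qed
  then have "\<forall>\<^sub>F t in at_right \<mu>. \<mu> < t \<and> (\<forall>v\<in>J. t * z v < adj_mul E J z v)"
    using assms(1) by (intro eventually_conj eventually_at_right_less eventually_ball_finite)
  then obtain t where t: "\<mu> < t" "\<forall>v\<in>J. t * z v < adj_mul E J z v"
    using eventually_happens trivial_limit_at_right_real by blast
  then have "sub_eigvec E J t z" using assms(3) by (auto simp: sub_eigvec_def less_imp_le)
  moreover have "0 < sum z J"
  proof -
    obtain v where "v \<in> J" using assms(2) by blast
    have nonneg: "\<forall>u\<in>J. 0 \<le> z u" using assms(3) by (simp add: sub_eigvec_def)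
    have "\<exists>u\<in>J. z u \<noteq> 0"
    proof (rule ccontr)
      assume all_zero: "\<not> (\<exists>u\<in>J. z u \<noteq> 0)"
      then have "adj_mul E J z v = 0" by (simp add: adj_mul_def)
      then show False using strict \<open>v \<in> J\<close> all_zero by auto
    qed
    then show ?thesis using assms(1) nonneg by (metis order_le_neq_trans sum_pos2)
  qed
  ultimately show ?thesis using t(1) cw_values_normalize by blast
qed

lemma cw_values_above_slack:
  assumes "finite J" "induced_strongly_connected J E" "sub_eigvec E J \<mu> y"
    and "slack_set E J \<mu> y \<noteq> {}"
  shows "\<exists>\<mu>'>\<mu>. \<mu>' \<in> cw_values E J"
proof -
  obtain z where "sub_eigvec E J \<mu> z" "slack_set E J \<mu> z = J"
    using slack_set_full[OF assms(1,2,3,4)] by blast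
  moreover have "J \<noteq> {}" using assms(4) by (auto simp: slack_set_def)
  ultimately show ?thesis using cw_values_above_strict assms(1) by blast
qed

lemma cw_root_eigvec:
  assumes "finite J" "induced_strongly_connected J E"
    and x: "sub_eigvec E J (cw_root E J) x" "sum x J = 1"
  shows "\<forall>v\<in>J. adj_mul E J x v = cw_root E J * x v" and "\<forall>v\<in>J. 0 < x v"
proof -
  have no_slack: "slack_set E J (cw_root E J) x = {}"
    using cw_values_above_slack[OF assms(1,2) x(1)] cw_root_upper by fastforce
  then show "\<forall>v\<in>J. adj_mul E J x v = cw_root E J * x v"
    using x(1) unfolding slack_set_def sub_eigvec_def by (metis (mono_tags) empty_Collect_eq order_less_le)
  have nonneg: "\<forall>v\<in>J. 0 \<le> x v" using x(1) by (simp add: sub_eigvec_def)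
  show "\<forall>v\<in>J. 0 < x v"
  proof (rule ccontr)
    assume "\<not> ?thesis"
    then obtain a where a: "a \<in> J" "\<not> 0 < x a" by blast
    obtain b where b: "b \<in> J" "0 < x b"
      using x(2) nonneg by (metis (no_types) order_le_neq_trans sum.neutral zero_neq_one)
    have "(a, b) \<in> (Restr E J)\<^sup>*"
      using assms(2) a b unfolding induced_strongly_connected_def by blast
    then obtain u w where "(u, w) \<in> Restr E J" "u \<notin> {v. 0 < x v}" "w \<in> {v. 0 < x v}"
      by (rule rtrancl_enters[where S = "{v. 0 < x v}"]) (use a b in auto)
    moreover from this have "x w \<le> adj_mul E J x u" using assms(1) nonneg by (intro adj_mul_ge_arc) auto
    ultimately have "u \<in> slack_set E J (cw_root E J) x"
      using nonneg by (auto simp: slack_set_def order.antisym)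
    then show False using no_slack by blast
  qed
qed

lemma cw_root_in_comp_eigenvalues:
  assumes "finite V" "J \<subseteq> V" "J \<noteq> {}" "induced_strongly_connected J E"
  shows "cw_root E J \<in> comp_eigenvalues V E"
proof -
  let ?r = "cw_root E J"
  have "finite J" using assms(1,2) finite_subset by blast
  then obtain x where x: "sub_eigvec E J ?r x" "sum x J = 1"
    using cw_root_attained assms(3) by blast
  have eig: "\<forall>v\<in>J. adj_mul E J x v = ?r * x v"
    using cw_root_eigvec[OF \<open>finite J\<close> assms(4) x] by blast
  have zero: "\<forall>v. v \<notin> J \<longrightarrow> x v = 0" and nonneg: "\<forall>v\<in>J. 0 \<le> x v"
    using x(1) by (auto simp: sub_eigvec_def)
  have AV: "(\<Sum>u\<in>V. adj E v u * x u) = adj_mul E J x v" for v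
    unfolding adj_mul_def using assms(1,2) zero by (intro sum.mono_neutral_left[symmetric]) auto
  have comp: "x v * ((\<Sum>u\<in>V. adj E v u * x u) - ?r * x v) = 0" for v
    using AV eig zero by (cases "v \<in> J") auto
  have "\<exists>v\<in>V. x v \<noteq> 0"
    using x(2) assms(2) by (metis sum.neutral subsetD zero_neq_one)
  moreover have "\<forall>v\<in>V. 0 \<le> (\<Sum>u\<in>V. adj E v u * x u) - ?r * x v"
  proof
    fix v show "0 \<le> (\<Sum>u\<in>V. adj E v u * x u) - ?r * x v"
      using AV eig zero adj_mul_nonneg[OF nonneg] by (cases "v \<in> J") auto
  qed
  moreover have "\<forall>v\<in>V. 0 \<le> x v"
  proof
    fix v show "0 \<le> x v" using nonneg zero by (cases "v \<in> J") auto
  qed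
  moreover have "(\<Sum>v\<in>V. x v * ((\<Sum>u\<in>V. adj E v u * x u) - ?r * x v)) = 0"
    by (intro sum.neutral ballI comp)
  ultimately show ?thesis unfolding comp_eigenvalues_def by blast
qed

text \<open>The Perron vector of \<open>H\<close>, extended by zero, would otherwise be a Perron vector of \<open>J\<close>
  vanishing outside \<open>H\<close>.\<close>
lemma cw_root_strict_mono:
  assumes "finite J" "H \<noteq> {}" "H \<subset> J" "induced_strongly_connected J E"
  shows "cw_root E H < cw_root E J"
proof -
  have "finite H" using assms(1,3) finite_subset by blast
  then obtain x where x: "sub_eigvec E H (cw_root E H) x" "sum x H = 1"
    using cw_root_attained assms(2) by blast
  have xJ: "sub_eigvec E J (cw_root E H) x" "sum x J = 1"
    using sub_eigvec_mono[OF assms(1) _ x(1)] assms(3) x(2) by auto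
  then have le: "cw_root E H \<le> cw_root E J"
    using cw_root_upper[of "cw_root E H" E J] by (auto simp: cw_values_def)
  obtain v where v: "v \<in> J" "v \<notin> H" using assms(3) by blast
  show ?thesis
  proof (rule ccontr)
    assume "\<not> ?thesis"
    then have "sub_eigvec E J (cw_root E J) x" using le xJ(1) by simp
    then have "0 < x v" using cw_root_eigvec(2)[OF assms(1,4) _ xJ(2)] v(1) by blast
    then show False using x(1) v(2) by (simp add: sub_eigvec_def)
  qed
qed

lemma nested_sc_triple_card_comp_eigenvalues:
  assumes "finite V" "induced_strongly_connected V E" "nested_sc_triple V E"
    and "finite (comp_eigenvalues V E)"
  shows "4 \<le> card (comp_eigenvalues V E)"
proof -
  obtain X1 X2 X3 where X: "X1 \<noteq> {}" "X1 \<subset> X2" "X2 \<subset> X3" "X3 \<subset> V"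
    and sc: "induced_strongly_connected X1 E" "induced_strongly_connected X2 E"
      "induced_strongly_connected X3 E"
    using assms(3) unfolding nested_sc_triple_def by blast
  have fin: "finite X2" "finite X3" using assms(1) X by (meson finite_subset less_imp_le)+
  have "cw_root E X1 < cw_root E X2" "cw_root E X2 < cw_root E X3" "cw_root E X3 < cw_root E V"
    using cw_root_strict_mono fin assms(1,2) sc X by blast+
  then have "card {cw_root E X1, cw_root E X2, cw_root E X3, cw_root E V} = 4" by simp
  moreover have "X1 \<subseteq> V" "X2 \<subseteq> V" "X3 \<subseteq> V" "X2 \<noteq> {}" "X3 \<noteq> {}" "V \<noteq> {}"
    using X by auto
  then have "{cw_root E X1, cw_root E X2, cw_root E X3, cw_root E V} \<subseteq> comp_eigenvalues V E"
    using cw_root_in_comp_eigenvalues[OF assms(1)] X(1) sc assms(2) by simp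
  ultimately show ?thesis by (metis card_mono[OF assms(4)])
qed

section \<open>Strongly connected vertex sets\<close>

lemma induced_strongly_connected_singleton: "induced_strongly_connected {x} R"
  unfolding induced_strongly_connected_def by simp

lemma induced_strongly_connectedI_hub:
  assumes "h \<in> Z" "\<And>z. z \<in> Z \<Longrightarrow> (z, h) \<in> (Restr R Z)\<^sup>* \<and> (h, z) \<in> (Restr R Z)\<^sup>*"
  shows "induced_strongly_connected Z R"
  unfolding induced_strongly_connected_def using assms by (meson rtrancl_trans)

lemma induced_strongly_connected_Un:
  assumes "induced_strongly_connected A R" "induced_strongly_connected B R" "A \<inter> B \<noteq> {}"
  shows "induced_strongly_connected (A \<union> B) R"
proof -
  obtain h where h: "h \<in> A" "h \<in> B" using assms(3) by blast
  have "(Restr R A)\<^sup>* \<subseteq> (Restr R (A \<union> B))\<^sup>*" "(Restr R B)\<^sup>* \<subseteq> (Restr R (A \<union> B))\<^sup>*"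
    by (intro rtrancl_mono; auto)+
  note mono = this
  show ?thesis
  proof (rule induced_strongly_connectedI_hub)
    show "h \<in> A \<union> B" using h by blast
    fix z assume "z \<in> A \<union> B"
    then have "(z, h) \<in> (Restr R A)\<^sup>* \<and> (h, z) \<in> (Restr R A)\<^sup>* \<or>
        (z, h) \<in> (Restr R B)\<^sup>* \<and> (h, z) \<in> (Restr R B)\<^sup>*"
      using h assms(1,2) unfolding induced_strongly_connected_def by blast
    then show "(z, h) \<in> (Restr R (A \<union> B))\<^sup>* \<and> (h, z) \<in> (Restr R (A \<union> B))\<^sup>*"
      using mono by blast
  qed
qed

lemma induced_strongly_connected_image:
  assumes "induced_strongly_connected X R" "\<forall>(p, q)\<in>R. (f p, f q) \<in> E"
  shows "induced_strongly_connected (f ` X) E"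
proof -
  have "(f p, f q) \<in> (Restr E (f ` X))\<^sup>*" if "(p, q) \<in> (Restr R X)\<^sup>*" for p q
    using that
  proof (induction rule: rtrancl_induct)
    case (step y z)
    then have "(f y, f z) \<in> Restr E (f ` X)" using assms(2) by auto
    with step.IH show ?case by (rule rtrancl_into_rtrancl)
  qed simp
  then show ?thesis using assms(1) unfolding induced_strongly_connected_def by blast
qed

lemma path_in_rtrancl:
  assumes "\<And>t. a \<le> t \<Longrightarrow> t < b \<Longrightarrow> (c t, c (Suc t)) \<in> R" "c ` {a..b} \<subseteq> Z" "a \<le> b"
  shows "(c a, c b) \<in> (Restr R Z)\<^sup>*"
  using assms
proof (induction b)
  case (Suc b)
  show ?case
  proof (cases "a = Suc b")
    case False
    have "c ` {a..b} \<subseteq> Z" using Suc.prems(2) by auto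
    then have "(c a, c b) \<in> (Restr R Z)\<^sup>*" using Suc.IH Suc.prems(1,3) False by simp
    moreover have "(c b, c (Suc b)) \<in> Restr R Z" using Suc.prems False by auto
    ultimately show ?thesis by (rule rtrancl_into_rtrancl)
  qed simp
qed simp

lemma closed_path_sc:
  assumes "\<And>t. a \<le> t \<Longrightarrow> t < b \<Longrightarrow> (c t, c (Suc t)) \<in> R" "a \<le> b" "(c b, c a) \<in> R"
  shows "induced_strongly_connected (c ` {a..b}) R"
proof (rule induced_strongly_connectedI_hub)
  let ?Z = "c ` {a..b}"
  fix z assume "z \<in> ?Z"
  then obtain t where t: "a \<le> t" "t \<le> b" "z = c t" by auto
  have "(c a, c t) \<in> (Restr R ?Z)\<^sup>*" "(c t, c b) \<in> (Restr R ?Z)\<^sup>*"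
    using t assms(1) by (intro path_in_rtrancl; auto)+
  moreover have "(c b, c a) \<in> Restr R ?Z" using assms(2,3) by auto
  ultimately show "(z, c a) \<in> (Restr R ?Z)\<^sup>* \<and> (c a, z) \<in> (Restr R ?Z)\<^sup>*"
    unfolding t(3) by (blast intro: rtrancl_into_rtrancl)
qed (use assms(2) in auto)

lemma closed_two_paths_sc:
  assumes c: "\<And>t. a \<le> t \<Longrightarrow> t < b \<Longrightarrow> (c t, c (Suc t)) \<in> R" "a \<le> b"
    and d: "\<And>t. a' \<le> t \<Longrightarrow> t < b' \<Longrightarrow> (d t, d (Suc t)) \<in> R" "a' \<le> b'"
    and cd: "(c b, d a') \<in> R" "(d b', c a) \<in> R"
  shows "induced_strongly_connected (c ` {a..b} \<union> d ` {a'..b'}) R"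
proof (rule induced_strongly_connectedI_hub)
  let ?Z = "c ` {a..b} \<union> d ` {a'..b'}"
  let ?R = "(Restr R ?Z)\<^sup>*"
  have "(c b, d a') \<in> Restr R ?Z" "(d b', c a) \<in> Restr R ?Z" using c(2) d(2) cd by auto
  then have arcs: "(c b, d a') \<in> ?R" "(d b', c a) \<in> ?R" by auto
  have paths: "(c a, c b) \<in> ?R" "(d a', d b') \<in> ?R"
    using c d by (intro path_in_rtrancl; auto)+
  have c_to_d: "(c a, d a') \<in> ?R" using rtrancl_trans[OF paths(1) arcs(1)] .
  have d_to_c: "(d a', c a) \<in> ?R" using rtrancl_trans[OF paths(2) arcs(2)] .
  fix z assume "z \<in> ?Z"
  then consider t where "a \<le> t" "t \<le> b" "z = c t" | t where "a' \<le> t" "t \<le> b'" "z = d t"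
    by auto
  then show "(z, c a) \<in> ?R \<and> (c a, z) \<in> ?R"
  proof cases
    case (1 t)
    have "(c a, c t) \<in> ?R" "(c t, c b) \<in> ?R" using 1 c by (intro path_in_rtrancl; auto)+
    then show ?thesis
      unfolding 1(3) using rtrancl_trans[OF _ rtrancl_trans[OF arcs(1) d_to_c]] by blast
  next
    case (2 t)
    have "(d a', d t) \<in> ?R" "(d t, d b') \<in> ?R" using 2 d by (intro path_in_rtrancl; auto)+
    then show ?thesis
      unfolding 2(3) using rtrancl_trans[OF _ arcs(2)] rtrancl_trans[OF c_to_d] by blast
  qed
qed (use c(2) in auto)

lemma nested_sc_tripleI:
  assumes "{x} \<subset> X2" "X2 \<subset> X3" "X3 \<subset> W"
    and "induced_strongly_connected X2 R" "induced_strongly_connected X3 R"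
  shows "nested_sc_triple W R"
  unfolding nested_sc_triple_def using assms induced_strongly_connected_singleton
  by (intro exI[of _ "{x}"] exI[of _ X2] exI[of _ X3]) simp

lemma nested_sc_triple_image:
  assumes "inj_on f W" "\<forall>(p, q)\<in>R. (f p, f q) \<in> E" "nested_sc_triple W R"
  shows "nested_sc_triple (f ` W) E"
proof -
  obtain X1 X2 X3 where X: "X1 \<noteq> {}" "X1 \<subset> X2" "X2 \<subset> X3" "X3 \<subset> W"
    and sc: "induced_strongly_connected X1 R" "induced_strongly_connected X2 R"
      "induced_strongly_connected X3 R"
    using assms(3) unfolding nested_sc_triple_def by blast
  have "X2 \<subseteq> W" "X3 \<subseteq> W" using X by auto
  then have "inj_on f X2" "inj_on f X3" using inj_on_subset[OF assms(1)] by auto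
  then have img: "f ` X1 \<subset> f ` X2" "f ` X2 \<subset> f ` X3" "f ` X3 \<subset> f ` W"
    using image_strict_mono[OF _ X(2)] image_strict_mono[OF _ X(3)] image_strict_mono[OF assms(1) X(4)]
    by simp_all
  have ne: "f ` X1 \<noteq> {}" using X(1) by simp
  note sc' = sc[THEN induced_strongly_connected_image[OF _ assms(2)]]
  show ?thesis
    unfolding nested_sc_triple_def
    by (intro exI[of _ "f ` X1"] exI[of _ "f ` X2"] exI[of _ "f ` X3"] conjI) (fact ne img sc')+
qed

lemma sc_embedding_onto:
  assumes "\<not> nested_sc_triple V E" "inj_on f W" "f ` W \<subseteq> V" "\<forall>(p, q)\<in>R. (f p, f q) \<in> E"
    and "{x} \<subset> Y" "Y \<subset> W" "induced_strongly_connected Y R" "induced_strongly_connected W R"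
  shows "f ` W = V"
proof (rule ccontr)
  assume "f ` W \<noteq> V"
  then have WV: "f ` W \<subset> V" using assms(3) by blast
  have "inj_on f Y" using inj_on_subset[OF assms(2)] assms(6) by blast
  then have xY: "{f x} \<subset> f ` Y" using image_strict_mono[OF _ assms(5)] by simp
  have YW: "f ` Y \<subset> f ` W" by (rule image_strict_mono[OF assms(2,6)])
  have "nested_sc_triple V E"
    by (rule nested_sc_tripleI[OF xY YW WV induced_strongly_connected_image[OF assms(7,4)]
          induced_strongly_connected_image[OF assms(8,4)]])
  with assms(1) show False by contradiction
qed

section \<open>Strongly connected subsets of a cycle\<close>

definition cycle_arcs :: "(nat \<Rightarrow> 'a) \<Rightarrow> nat \<Rightarrow> ('a \<times> 'a) set" where
  "cycle_arcs c m = {(c t, c (Suc t)) | t. Suc t < m} \<union> {(c (m - 1), c 0)}"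

lemma cycle_arcs_subsetD:
  assumes "cycle_arcs c m \<subseteq> R"
  shows "Suc t < m \<Longrightarrow> (c t, c (Suc t)) \<in> R" and "(c (m - 1), c 0) \<in> R"
  using assms by (auto simp: cycle_arcs_def)

lemma cycle_arcs_image: "map_prod h h ` cycle_arcs c m = cycle_arcs (h \<circ> c) m"
  unfolding cycle_arcs_def by auto

lemma cycle_arcs_subset_Times: "1 \<le> m \<Longrightarrow> cycle_arcs c m \<subseteq> c ` {..<m} \<times> c ` {..<m}"
  unfolding cycle_arcs_def by auto

lemma cycle_sc:
  assumes "cycle_arcs c m \<subseteq> R" "1 \<le> m"
  shows "induced_strongly_connected (c ` {..<m}) R"
proof -
  have "induced_strongly_connected (c ` {0..m - 1}) R"
    using cycle_arcs_subsetD[OF assms(1)] assms(2) by (intro closed_path_sc) auto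
  moreover have "{0..m - 1} = {..<m}" using assms(2) by auto
  ultimately show ?thesis by simp
qed

lemma chord_sc_subset:
  assumes cyc: "cycle_arcs c m \<subseteq> R" and inj: "inj_on c {..<m}"
    and ik: "i < m" "k < m" "k \<noteq> i" and chord: "(c i, c k) \<in> R" "(c i, c k) \<notin> cycle_arcs c m"
  shows "\<exists>Y. {c i} \<subset> Y \<and> Y \<subset> c ` {..<m} \<and> induced_strongly_connected Y R"
proof -
  have mem: "c t \<in> c ` A \<longleftrightarrow> t \<in> A" if "t < m" "A \<subseteq> {..<m}" for t A
    using inj_on_image_mem_iff[OF inj] that by simp
  have "c k \<noteq> c i" using ik inj by (metis inj_onD lessThan_iff)
  have not_next: "k \<noteq> Suc i" using chord(2) ik by (auto simp: cycle_arcs_def)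
  have not_close: "\<not> (i = m - 1 \<and> k = 0)"
  proof
    assume "i = m - 1 \<and> k = 0"
    then have "(c i, c k) \<in> cycle_arcs c m" by (simp add: cycle_arcs_def)
    with chord(2) show False by contradiction
  qed
  txt \<open>The chord closes either the segment from \<open>c k\<close> to \<open>c i\<close>, or the segment from \<open>c k\<close>
    around through \<open>c 0\<close> to \<open>c i\<close>; in both cases some vertex \<open>c t\<close> of the cycle is left out.\<close>
  obtain I t where I: "I \<subseteq> {..<m}" "i \<in> I" "k \<in> I" "t < m" "t \<notin> I"
    and sc: "induced_strongly_connected (c ` I) R"
  proof (cases "k < i")
    case True
    have "induced_strongly_connected (c ` {k..i}) R"
      using True ik chord(1) cycle_arcs_subsetD[OF cyc] by (intro closed_path_sc) auto
    moreover obtain t where "t < m" "t \<notin> {k..i}"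
    proof (cases "k = 0")
      case True then show ?thesis using that[of "m - 1"] not_close ik by auto
    next
      case False then show ?thesis using that[of 0] ik by auto
    qed
    moreover have "{k..i} \<subseteq> {..<m}" "i \<in> {k..i}" "k \<in> {k..i}" using True ik by auto
    ultimately show ?thesis using that by blast
  next
    case False
    then have "Suc i < k" using ik not_next by simp
    then have "induced_strongly_connected (c ` ({0..i} \<union> {k..m - 1})) R"
      using ik chord(1) cycle_arcs_subsetD[OF cyc] unfolding image_Un
      by (intro closed_two_paths_sc) auto
    moreover have "{0..i} \<union> {k..m - 1} \<subseteq> {..<m}" "i \<in> {0..i} \<union> {k..m - 1}"
      "k \<in> {0..i} \<union> {k..m - 1}" "Suc i < m" "Suc i \<notin> {0..i} \<union> {k..m - 1}"
      using \<open>Suc i < k\<close> ik by auto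
    ultimately show ?thesis using that by blast
  qed
  have "{c i} \<subset> c ` I" using I(2,3) \<open>c k \<noteq> c i\<close> by blast
  moreover have "c ` I \<subset> c ` {..<m}"
  proof -
    have "c t \<notin> c ` I" using mem[OF I(4,1)] I(5) by simp
    moreover have "c t \<in> c ` {..<m}" using I(4) by simp
    ultimately show ?thesis using image_mono[OF I(1), of c] by blast
  qed
  ultimately show ?thesis using sc by blast
qed

lemma chord_nested_sc_triple:
  assumes "cycle_arcs c m \<subseteq> R" "inj_on c {..<m}" "c ` {..<m} \<subset> W"
    and "(p, q) \<in> R" "p \<in> c ` {..<m}" "q \<in> c ` {..<m}" "p \<noteq> q" "(p, q) \<notin> cycle_arcs c m"
  shows "nested_sc_triple W R"
proof -
  obtain i k where "i < m" "k < m" "p = c i" "q = c k" using assms(5,6) by blast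
  then obtain Y where "{p} \<subset> Y" "Y \<subset> c ` {..<m}" "induced_strongly_connected Y R"
    using chord_sc_subset[OF assms(1,2) \<open>i < m\<close> \<open>k < m\<close>] assms(4,7,8) by blast
  moreover have "induced_strongly_connected (c ` {..<m}) R"
    using cycle_sc[OF assms(1)] \<open>i < m\<close> by simp
  ultimately show ?thesis using assms(3) by (intro nested_sc_tripleI)
qed

section \<open>Two cycles sharing one vertex\<close>

locale figure_eight =
  fixes c d :: "nat \<Rightarrow> 'a" and m n :: nat
  assumes two_le_m: "2 \<le> m" and two_le_n: "2 \<le> n"
    and inj_c: "inj_on c {..<m}" and inj_d: "inj_on d {..<n}"
    and hub: "d 0 = c 0" and meet: "c ` {..<m} \<inter> d ` {..<n} = {c 0}"
begin

lemma swapped: "figure_eight d c n m"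
  using two_le_m two_le_n inj_c inj_d hub meet by unfold_locales auto

lemma d_notin_C:
  assumes "0 < t" "t < n"
  shows "d t \<notin> c ` {..<m}"
proof
  assume "d t \<in> c ` {..<m}"
  moreover have "d t \<in> d ` {..<n}" using assms(2) by simp
  ultimately have "d t \<in> c ` {..<m} \<inter> d ` {..<n}" by blast
  then have "d t = d 0" using meet hub by simp
  then show False using inj_onD[OF inj_d] assms by fastforce
qed

lemma c_notin_D: "0 < t \<Longrightarrow> t < m \<Longrightarrow> c t \<notin> d ` {..<n}"
  using figure_eight.d_notin_C[OF swapped] .

lemma C_psubset: "c ` {..<m} \<subset> c ` {..<m} \<union> d ` {..<n}"
  using d_notin_C[of 1] two_le_n by force

lemma hub_mem: "c 0 \<in> c ` {..<m}" "c 0 \<in> d ` {..<n}"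
proof -
  show "c 0 \<in> c ` {..<m}" using two_le_m by simp
  have "d 0 \<in> d ` {..<n}" using two_le_n by simp
  then show "c 0 \<in> d ` {..<n}" using hub by simp
qed

text \<open>The arc \<open>c i \<rightarrow> d j\<close> closes the walk
  \<open>c 0 \<rightarrow> \<dots> \<rightarrow> c i \<rightarrow> d j \<rightarrow> \<dots> \<rightarrow> d (n - 1) \<rightarrow> c 0\<close>.\<close>
lemma shortcut_sc:
  assumes "cycle_arcs c m \<subseteq> R" "cycle_arcs d n \<subseteq> R" "(c i, d j) \<in> R" "i < m" "j < n"
  shows "induced_strongly_connected (c ` {0..i} \<union> d ` {j..n - 1}) R"
  using assms cycle_arcs_subsetD[OF assms(1)] cycle_arcs_subsetD[OF assms(2)] hub
  by (intro closed_two_paths_sc) auto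

lemma cross_arc_nested_sc_triple:
  assumes cyc: "cycle_arcs c m \<subseteq> R" "cycle_arcs d n \<subseteq> R"
    and arc: "(c i, d j) \<in> R" and ij: "0 < i" "i < m" "0 < j" "j < n" "(i, j) \<noteq> (m - 1, 1)"
  shows "nested_sc_triple (c ` {..<m} \<union> d ` {..<n}) R"
proof -
  let ?C = "c ` {..<m}" and ?D = "d ` {..<n}" and ?P = "c ` {0..i} \<union> d ` {j..n - 1}"
  have P: "induced_strongly_connected ?P R" using shortcut_sc[OF cyc arc] ij by simp
  have P_sub: "?P \<subseteq> ?C \<union> ?D" using ij by auto
  have C: "induced_strongly_connected ?C R" and D: "induced_strongly_connected ?D R"
    using cycle_sc[OF cyc(1)] cycle_sc[OF cyc(2)] two_le_m two_le_n by auto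
  have c0: "c 0 \<in> ?C" "c 0 \<in> ?D" "c 0 \<in> ?P" using hub_mem by auto
  show ?thesis
  proof (cases "j = 1")
    case False
    txt \<open>Then \<open>d 1\<close> is avoided: \<open>{c 0} \<subset> C \<subset> C \<union> P \<subset> C \<union> D\<close>.\<close>
    have "{j..n - 1} \<subseteq> {..<n}" using ij by auto
    then have "d 1 \<notin> ?C \<union> ?P"
      using d_notin_C[of 1] two_le_n inj_on_image_mem_iff[OF inj_d, of 1 "{j..n - 1}"] False ij
      by auto
    moreover have "d (n - 1) \<in> ?P" "d (n - 1) \<notin> ?C" using ij d_notin_C[of "n - 1"] by auto
    moreover have "c 1 \<in> ?C" "c 1 \<noteq> c 0" using two_le_m inj_onD[OF inj_c, of 1 0] by auto
    moreover have "induced_strongly_connected (?C \<union> ?P) R"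
      using c0 by (intro induced_strongly_connected_Un[OF C P]) blast
    moreover have "d 1 \<in> ?D" using two_le_n by auto
    ultimately show ?thesis using P_sub c0 C
      by (intro nested_sc_tripleI[of "c 0" ?C "?C \<union> ?P"]) blast+
  next
    case True
    txt \<open>Then \<open>i < m - 1\<close> and \<open>c (m - 1)\<close> is avoided: \<open>{c 0} \<subset> D \<subset> D \<union> P \<subset> C \<union> D\<close>.\<close>
    then have "i < m - 1" using ij by auto
    moreover have "{0..i} \<subseteq> {..<m}" using ij by auto
    ultimately have "c (m - 1) \<notin> c ` {0..i}"
      using inj_on_image_mem_iff[OF inj_c, of "m - 1" "{0..i}"] two_le_m by simp
    moreover have "c (m - 1) \<notin> ?D" using c_notin_D[of "m - 1"] two_le_m by simp
    moreover have "d ` {j..n - 1} \<subseteq> ?D" using ij by auto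
    ultimately have "c (m - 1) \<notin> ?D \<union> ?P" by blast
    moreover have "c i \<in> ?P" "c i \<notin> ?D" using ij c_notin_D[of i] by auto
    moreover have "d 1 \<in> ?D" "d 1 \<noteq> c 0" using two_le_n inj_onD[OF inj_d, of 1 0] hub by auto
    moreover have "induced_strongly_connected (?D \<union> ?P) R"
      using c0 by (intro induced_strongly_connected_Un[OF D P]) blast
    moreover have "c (m - 1) \<in> ?C" using two_le_m by auto
    ultimately show ?thesis using P_sub c0 D
      by (intro nested_sc_tripleI[of "c 0" ?D "?D \<union> ?P"]) blast+
  qed
qed

lemma sc_chain:
  assumes "cycle_arcs c m \<subseteq> R" "cycle_arcs d n \<subseteq> R"
  shows "{c 0} \<subset> c ` {..<m}" "induced_strongly_connected (c ` {..<m}) R"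
    and "induced_strongly_connected (c ` {..<m} \<union> d ` {..<n}) R"
proof -
  have "c 1 \<noteq> c 0" using two_le_m inj_onD[OF inj_c, of 1 0] by auto
  then show "{c 0} \<subset> c ` {..<m}" using two_le_m by auto
  show C: "induced_strongly_connected (c ` {..<m}) R" using cycle_sc[OF assms(1)] two_le_m by simp
  have D: "induced_strongly_connected (d ` {..<n}) R" using cycle_sc[OF assms(2)] two_le_n by simp
  show "induced_strongly_connected (c ` {..<m} \<union> d ` {..<n}) R"
    using meet by (intro induced_strongly_connected_Un[OF C D]) simp
qed

lemma arcs_classified:
  assumes cyc: "cycle_arcs c m \<subseteq> R" "cycle_arcs d n \<subseteq> R"
    and R: "R \<subseteq> (c ` {..<m} \<union> d ` {..<n}) \<times> (c ` {..<m} \<union> d ` {..<n})" "\<forall>v. (v, v) \<notin> R"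
    and no_triple: "\<not> nested_sc_triple (c ` {..<m} \<union> d ` {..<n}) R"
  shows "R \<subseteq> cycle_arcs c m \<union> cycle_arcs d n \<union> {(c (m - 1), d 1), (d (n - 1), c 1)}"
proof
  let ?C = "c ` {..<m}" and ?D = "d ` {..<n}"
  fix e assume "e \<in> R"
  then obtain p q where e: "e = (p, q)" "(p, q) \<in> R" by (cases e) auto
  have "p \<noteq> q" using R(2) e(2) by auto
  note c0 = hub_mem
  have "p \<in> ?C \<union> ?D" "q \<in> ?C \<union> ?D" using R(1) e(2) by auto
  then consider "p \<in> ?C" "q \<in> ?C" | "p \<in> ?D" "q \<in> ?D"
    | "p \<in> ?C - ?D" "q \<in> ?D - ?C" | "p \<in> ?D - ?C" "q \<in> ?C - ?D"
    by blast
  then show "e \<in> cycle_arcs c m \<union> cycle_arcs d n \<union> {(c (m - 1), d 1), (d (n - 1), c 1)}"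
  proof cases
    case 1
    then have "(p, q) \<in> cycle_arcs c m"
      using chord_nested_sc_triple[OF cyc(1) inj_c C_psubset e(2) 1 \<open>p \<noteq> q\<close>] no_triple by blast
    then show ?thesis using e(1) by simp
  next
    case 2
    have "?D \<subset> ?C \<union> ?D" using figure_eight.C_psubset[OF swapped] by (simp add: Un_commute)
    then have "(p, q) \<in> cycle_arcs d n"
      using chord_nested_sc_triple[OF cyc(2) inj_d _ e(2) 2 \<open>p \<noteq> q\<close>] no_triple by blast
    then show ?thesis using e(1) by simp
  next
    case 3
    then obtain i j where ij: "p = c i" "i < m" "q = d j" "j < n" by blast
    have "0 < i" "0 < j" using 3 ij c0 hub by (auto intro: gr0I)
    then have "(i, j) = (m - 1, 1)"
      using cross_arc_nested_sc_triple[OF cyc, of i j] e(2) ij no_triple by blast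
    then show ?thesis using e(1) ij by simp
  next
    case 4
    then obtain i j where ij: "p = d j" "j < n" "q = c i" "i < m" by blast
    have "0 < i" "0 < j" using 4 ij c0 hub by (auto intro: gr0I)
    moreover have "\<not> nested_sc_triple (?D \<union> ?C) R" using no_triple by (simp add: Un_commute)
    ultimately have "(j, i) = (n - 1, 1)"
      using figure_eight.cross_arc_nested_sc_triple[OF swapped cyc(2,1), of j i] e(2) ij by blast
    then show ?thesis using e(1) ij by simp
  qed
qed

end

section \<open>Digraph isomorphisms\<close>

lemma digraph_iso_sym:
  assumes "digraph_iso V E W X"
  shows "digraph_iso W X V E"
proof -
  obtain f where f: "bij_betw f V W" "\<forall>u\<in>V. \<forall>v\<in>V. (u, v) \<in> E \<longleftrightarrow> (f u, f v) \<in> X"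
    using assms unfolding digraph_iso_def by blast
  let ?g = "inv_into V f"
  have "bij_betw ?g W V" by (rule bij_betw_inv_into[OF f(1)])
  moreover have "\<forall>p\<in>W. \<forall>q\<in>W. (p, q) \<in> X \<longleftrightarrow> (?g p, ?g q) \<in> E"
    using f bij_betw_inv_into_right[OF f(1)] bij_betwE[OF \<open>bij_betw ?g W V\<close>] by metis
  ultimately show ?thesis unfolding digraph_iso_def by blast
qed

lemma digraph_iso_trans:
  assumes "digraph_iso V E W X" "digraph_iso W X U Y"
  shows "digraph_iso V E U Y"
proof -
  obtain f where f: "bij_betw f V W" "\<forall>u\<in>V. \<forall>v\<in>V. (u, v) \<in> E \<longleftrightarrow> (f u, f v) \<in> X"
    using assms(1) unfolding digraph_iso_def by blast
  obtain g where g: "bij_betw g W U" "\<forall>u\<in>W. \<forall>v\<in>W. (u, v) \<in> X \<longleftrightarrow> (g u, g v) \<in> Y"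
    using assms(2) unfolding digraph_iso_def by blast
  have "bij_betw (g \<circ> f) V U" using f(1) g(1) by (rule bij_betw_trans)
  moreover have "\<forall>u\<in>V. \<forall>v\<in>V. (u, v) \<in> E \<longleftrightarrow> ((g \<circ> f) u, (g \<circ> f) v) \<in> Y"
    using f g bij_betwE[OF f(1)] by auto
  ultimately show ?thesis unfolding digraph_iso_def by blast
qed

lemma digraph_iso_image:
  assumes "bij_betw f W U" "X \<subseteq> W \<times> W" "map_prod f f ` X = Y"
  shows "digraph_iso W X U Y"
  unfolding digraph_iso_def
proof (intro exI conjI ballI)
  show "bij_betw f W U" by fact
  fix p q assume "p \<in> W" "q \<in> W"
  have "(f p, f q) \<in> Y \<longleftrightarrow> (\<exists>(a, b)\<in>X. f a = f p \<and> f b = f q)" using assms(3) by force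
  also have "\<dots> \<longleftrightarrow> (p, q) \<in> X"
    using assms(2) bij_betw_imp_inj_on[OF assms(1)] \<open>p \<in> W\<close> \<open>q \<in> W\<close>
    by (auto dest: inj_onD)
  finally show "(p, q) \<in> X \<longleftrightarrow> (f p, f q) \<in> Y" ..
qed

lemma pullback_digraph_iso:
  assumes "bij_betw f W V" "E \<subseteq> V \<times> V"
  shows "digraph_iso V E W {(p, q). p \<in> W \<and> q \<in> W \<and> (f p, f q) \<in> E}"
proof (rule digraph_iso_sym, rule digraph_iso_image[OF assms(1)])
  show "map_prod f f ` {(p, q). p \<in> W \<and> q \<in> W \<and> (f p, f q) \<in> E} = E"
  proof
    show "E \<subseteq> map_prod f f ` {(p, q). p \<in> W \<and> q \<in> W \<and> (f p, f q) \<in> E}"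
    proof
      fix e assume "e \<in> E"
      then obtain u v where uv: "e = (u, v)" "u \<in> V" "v \<in> V" using assms(2) by blast
      then obtain p q where "p \<in> W" "q \<in> W" "u = f p" "v = f q"
        using assms(1) unfolding bij_betw_def by blast
      then show "e \<in> map_prod f f ` {(p, q). p \<in> W \<and> q \<in> W \<and> (f p, f q) \<in> E}"
        using \<open>e \<in> E\<close> uv(1) by (auto intro!: image_eqI[of _ _ "(p, q)"])
    qed
  qed auto
qed auto

section \<open>The digraphs \<open>\<infinity>(r, s)\<close>, \<open>D\<^sub>1(r, s)\<close> and \<open>D\<^sub>2(r, s)\<close>\<close>

text \<open>Zero-based enumerations of the two cycles of \<open>\<infinity>(r, s)\<close>: \<open>inf_cyc1 t\<close> is vertex \<open>t + 1\<close>
  and \<open>inf_cyc2 t\<close> is vertex \<open>(t + 1)'\<close>.\<close>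
definition inf_cyc1 :: "nat \<Rightarrow> nat + nat" where "inf_cyc1 t = cv1 (Suc t)"
definition inf_cyc2 :: "nat \<Rightarrow> nat + nat" where "inf_cyc2 t = cv2 (Suc t)"

lemma inf_verts_cycles: "inf_verts r s = inf_cyc1 ` {..<r} \<union> inf_cyc2 ` {..<s}"
proof -
  have "inf_cyc1 ` {..<r} = cv1 ` (Suc ` {..<r})" "inf_cyc2 ` {..<s} = cv2 ` (Suc ` {..<s})"
    by (auto simp: inf_cyc1_def inf_cyc2_def image_image)
  then show ?thesis by (simp add: inf_verts_def image_Suc_lessThan)
qed

lemma inf_arcs_cycles:
  assumes "1 \<le> r" "1 \<le> s"
  shows "inf_arcs r s = cycle_arcs inf_cyc1 r \<union> cycle_arcs inf_cyc2 s"
proof -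
  have shift: "{(g i, g (i + 1)) | i. 1 \<le> i \<and> i < k} = {(g (Suc t), g (Suc (Suc t))) | t. Suc t < k}"
    for g :: "nat \<Rightarrow> nat + nat" and k
  proof (intro equalityI subsetI)
    fix x assume "x \<in> {(g i, g (i + 1)) | i. 1 \<le> i \<and> i < k}"
    then obtain i where "x = (g i, g (i + 1))" "1 \<le> i" "i < k" by blast
    then show "x \<in> {(g (Suc t), g (Suc (Suc t))) | t. Suc t < k}"
      by (intro CollectI exI[of _ "i - 1"]) auto
  qed auto
  show ?thesis
    unfolding inf_arcs_def cycle_arcs_def shift[of cv1] shift[of cv2] inf_cyc1_def inf_cyc2_def
    using assms by auto
qed

lemma inf_arcs_subset_verts:
  assumes "1 \<le> r" "1 \<le> s"
  shows "inf_arcs r s \<subseteq> inf_verts r s \<times> inf_verts r s"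
  using cycle_arcs_subset_Times[OF assms(1), of inf_cyc1] cycle_arcs_subset_Times[OF assms(2), of inf_cyc2]
  unfolding inf_arcs_cycles[OF assms] inf_verts_cycles by blast

lemma inf_figure_eight:
  assumes "2 \<le> r" "2 \<le> s"
  shows "figure_eight inf_cyc1 inf_cyc2 r s"
  using assms
  by unfold_locales (auto simp: inj_on_def inf_cyc1_def inf_cyc2_def cv1_def cv2_def split: if_splits)

lemma inf_special_arcs:
  assumes "2 \<le> r" "2 \<le> s"
  shows "(inf_cyc1 (r - 1), inf_cyc2 1) = (cv1 r, cv2 2)" "(inf_cyc2 (s - 1), inf_cyc1 1) = (cv2 s, cv1 2)"
  using assms by (simp_all add: inf_cyc1_def inf_cyc2_def numeral_2_eq_2)

fun inf_swap :: "nat + nat \<Rightarrow> nat + nat" where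
  "inf_swap (Inl i) = cv2 i"
| "inf_swap (Inr j) = Inl j"

lemma inf_swap_cyc: "inf_swap (inf_cyc1 t) = inf_cyc2 t" "inf_swap (inf_cyc2 t) = inf_cyc1 t"
  by (cases t; simp add: inf_cyc1_def inf_cyc2_def cv1_def cv2_def)+

lemma inf_swap_verts: "inf_swap ` inf_verts r s = inf_verts s r"
  by (simp add: inf_verts_cycles image_Un image_image inf_swap_cyc Un_commute)

lemma inf_swap_involution: "v \<in> inf_verts r s \<Longrightarrow> inf_swap (inf_swap v) = v"
  unfolding inf_verts_cycles by (auto simp: inf_swap_cyc)

lemma inf_swap_iso:
  assumes "2 \<le> r" "2 \<le> s"
  shows "digraph_iso (inf_verts r s) (inf_arcs r s \<union> {(cv2 s, cv1 2)})
           (inf_verts s r) (type1_arcs s r)"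
proof (rule digraph_iso_image)
  show "bij_betw inf_swap (inf_verts r s) (inf_verts s r)"
    using inf_swap_involution inf_swap_verts by (intro bij_betw_byWitness[where f' = inf_swap]) auto
  have arcs: "inf_arcs r s \<union> {(cv2 s, cv1 2)} =
      cycle_arcs inf_cyc1 r \<union> cycle_arcs inf_cyc2 s \<union> {(inf_cyc2 (s - 1), inf_cyc1 1)}"
    using assms inf_special_arcs(2)[OF assms] by (simp add: inf_arcs_cycles)
  have "inf_cyc2 (s - 1) \<in> inf_verts r s" "inf_cyc1 1 \<in> inf_verts r s"
    using assms unfolding inf_verts_cycles by auto
  then show "inf_arcs r s \<union> {(cv2 s, cv1 2)} \<subseteq> inf_verts r s \<times> inf_verts r s"
    using inf_arcs_subset_verts[of r s] assms inf_special_arcs(2)[OF assms] by auto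
  have "type1_arcs s r =
      cycle_arcs inf_cyc1 s \<union> cycle_arcs inf_cyc2 r \<union> {(inf_cyc1 (s - 1), inf_cyc2 1)}"
    using assms inf_special_arcs(1)[of s r] by (simp add: type1_arcs_def inf_arcs_cycles)
  then show "map_prod inf_swap inf_swap ` (inf_arcs r s \<union> {(cv2 s, cv1 2)}) = type1_arcs s r"
    unfolding arcs by (simp add: image_Un cycle_arcs_image o_def inf_swap_cyc Un_ac)
qed

lemma inf_arcs_classified:
  assumes "2 \<le> r" "2 \<le> s" "inf_arcs r s \<subseteq> X" "X \<subseteq> inf_verts r s \<times> inf_verts r s"
    and "\<forall>v. (v, v) \<notin> X" "\<not> nested_sc_triple (inf_verts r s) X"
  shows "X \<subseteq> inf_arcs r s \<union> {(cv1 r, cv2 2), (cv2 s, cv1 2)}"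
proof -
  have arcs: "inf_arcs r s = cycle_arcs inf_cyc1 r \<union> cycle_arcs inf_cyc2 s"
    using assms(1,2) by (simp add: inf_arcs_cycles)
  then have "cycle_arcs inf_cyc1 r \<subseteq> X" "cycle_arcs inf_cyc2 s \<subseteq> X" using assms(3) by auto
  then have "X \<subseteq> cycle_arcs inf_cyc1 r \<union> cycle_arcs inf_cyc2 s \<union>
      {(inf_cyc1 (r - 1), inf_cyc2 1), (inf_cyc2 (s - 1), inf_cyc1 1)}"
    by (rule figure_eight.arcs_classified[OF inf_figure_eight[OF assms(1,2)] _ _
          assms(4)[unfolded inf_verts_cycles] assms(5) assms(6)[unfolded inf_verts_cycles]])
  then show ?thesis unfolding arcs inf_special_arcs[OF assms(1,2)] .
qed

lemma inf_extension_cases: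
  assumes "2 \<le> r" "2 \<le> s" "digraph_iso V E (inf_verts r s) X"
    and "inf_arcs r s \<subseteq> X" "X \<subseteq> inf_arcs r s \<union> {(cv1 r, cv2 2), (cv2 s, cv1 2)}"
  shows "\<exists>r' s'. ((r' = r \<and> s' = s) \<or> (r' = s \<and> s' = r)) \<and>
           (digraph_iso V E (inf_verts r' s') (inf_arcs r' s') \<or>
            digraph_iso V E (inf_verts r' s') (type1_arcs r' s') \<or>
            digraph_iso V E (inf_verts r' s') (type2_arcs r' s'))"
proof -
  consider "X = inf_arcs r s" | "X = type1_arcs r s" | "X = type2_arcs r s"
    | "X = inf_arcs r s \<union> {(cv2 s, cv1 2)}"
    using assms(4,5) unfolding type1_arcs_def type2_arcs_def by blast
  then show ?thesis
  proof cases
    case 4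
    have "digraph_iso V E (inf_verts s r) (type1_arcs s r)"
      using digraph_iso_trans[OF assms(3)[unfolded 4] inf_swap_iso[OF assms(1,2)]] .
    then show ?thesis by blast
  qed (use assms(3) in blast)+
qed

lemma card_comp_eigenvalues_3_no_nested_sc_triple:
  assumes "digraph V E" "strongly_connected V E" "card (comp_eigenvalues V E) = 3"
  shows "\<not> nested_sc_triple V E"
proof
  assume "nested_sc_triple V E"
  moreover have "finite V" "E \<subseteq> V \<times> V" using assms(1) by (auto simp: digraph_def)
  moreover from this(2) have "induced_strongly_connected V E"
    using assms(2) unfolding strongly_connected_def induced_strongly_connected_def
    by (simp add: Int_absorb2)
  moreover have "finite (comp_eigenvalues V E)" using assms(3) by (metis card.infinite zero_neq_numeral)
  ultimately have "4 \<le> card (comp_eigenvalues V E)"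
    using nested_sc_triple_card_comp_eigenvalues by blast
  with assms(3) show False by simp
qed

lemma inf_embedding_classified:
  assumes "2 \<le> r" "2 \<le> s" "digraph V E" "\<not> nested_sc_triple V E"
    and "has_subdigraph_iso V E (inf_verts r s) (inf_arcs r s)"
  obtains X where "digraph_iso V E (inf_verts r s) X" "inf_arcs r s \<subseteq> X"
    "X \<subseteq> inf_arcs r s \<union> {(cv1 r, cv2 2), (cv2 s, cv1 2)}"
proof -
  let ?W = "inf_verts r s"
  have V: "E \<subseteq> V \<times> V" "\<forall>v. (v, v) \<notin> E" using assms(3) by (auto simp: digraph_def)
  obtain f where f: "inj_on f ?W" "f ` ?W \<subseteq> V" "\<forall>(p, q)\<in>inf_arcs r s. (f p, f q) \<in> E"
    using assms(5) unfolding has_subdigraph_iso_def by blast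
  have inf: "figure_eight inf_cyc1 inf_cyc2 r s" using assms(1,2) by (rule inf_figure_eight)
  have "cycle_arcs inf_cyc1 r \<subseteq> inf_arcs r s" "cycle_arcs inf_cyc2 s \<subseteq> inf_arcs r s"
    using inf_arcs_cycles assms(1,2) by auto
  note chain = figure_eight.sc_chain[OF inf this, folded inf_verts_cycles]
  have onto: "f ` ?W = V"
    using figure_eight.C_psubset[OF inf, folded inf_verts_cycles]
    by (rule sc_embedding_onto[OF assms(4) f chain(1) _ chain(2,3)])
  define X where "X = {(p, q). p \<in> ?W \<and> q \<in> ?W \<and> (f p, f q) \<in> E}"
  have "bij_betw f ?W V" using f(1) onto by (simp add: bij_betw_def)
  then have "digraph_iso V E ?W X" unfolding X_def using V(1) by (rule pullback_digraph_iso)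
  moreover have "inf_arcs r s \<subseteq> X"
    using f(3) inf_arcs_subset_verts[of r s] assms(1,2) by (auto simp: X_def)
  moreover have "X \<subseteq> ?W \<times> ?W" "\<forall>v. (v, v) \<notin> X" using V(2) by (auto simp: X_def)
  moreover have "\<not> nested_sc_triple ?W X"
    using nested_sc_triple_image[OF f(1), of X E] assms(4) onto by (auto simp: X_def)
  ultimately show ?thesis using that inf_arcs_classified[OF assms(1,2)] by blast
qed

theorem mainTheorem3:
  fixes V :: "'a set" and E :: "('a \<times> 'a) set" and r s :: nat
  assumes "digraph V E"
    and "strongly_connected V E"
    and "card (comp_eigenvalues V E) = 3"
    and "r \<ge> 2" and "s \<ge> 2"
    and "has_subdigraph_iso V E (inf_verts r s) (inf_arcs r s)"
  shows "\<exists>r' s'. ((r' = r \<and> s' = s) \<or> (r' = s \<and> s' = r)) \<and>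
           (digraph_iso V E (inf_verts r' s') (inf_arcs r' s') \<or>
            digraph_iso V E (inf_verts r' s') (type1_arcs r' s') \<or>
            digraph_iso V E (inf_verts r' s') (type2_arcs r' s'))"
proof -
  have "\<not> nested_sc_triple V E"
    using assms(1-3) by (rule card_comp_eigenvalues_3_no_nested_sc_triple)
  then obtain X where "digraph_iso V E (inf_verts r s) X" "inf_arcs r s \<subseteq> X"
    "X \<subseteq> inf_arcs r s \<union> {(cv1 r, cv2 2), (cv2 s, cv1 2)}"
    using inf_embedding_classified[OF assms(4,5,1) _ assms(6)] by blast
  then show ?thesis by (rule inf_extension_cases[OF assms(4,5)])
qed

end
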